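(* Let $n\ge1$ and $T\in M_n(\mathcal L_K)$, regarded as an operator on $\mathbb C^n\otimes\ell_2(F_\infty)$. Put $$a(T)=\sup\{\|Tq\|_2: q\in\mathbb C^n\otimes\mathcal L^2_\alpha,\ \|q\|_2\le1\},\qquad b(T)=\sup\{\|T^*(b\otimes\delta_{1})\|_2: b\in\mathbb C^n,\ \|b\|_2\le1\},$$ where $\mathcal L^2_\alpha=\mathrm{span}\{\delta_x:x\in F_\alpha\}$ and $\delta_1$ is the basis vector of the identity element. Then $$\max\{a(T),b(T)\}\le\|T\|\le a(T)+b(T).$$
   Context: Let $F_\infty$ be the free group with free generators split into two infinite families $\alpha_1,\alpha_2,\dots$ and $e_1,e_2,\dots$; $F_\alpha$ is the subgroup generated by the $\alpha_i$, and $K=\bigcup_{j\ge1}e_jF_\alpha$. $\ell_2(F_\infty)$ has orthonormal basis $\{\delta_x\}$, $\lambda(x)\delta_y=\delta_{xy}$, and $\mathcal L_K=\mathrm{span}\{\lambda(x):x\in K\}$ (finite linear combinations). $M_n(\mathcal L_K)=M_n\otimes\mathcal L_K$ acts on $\mathbb C^n\otimes\ell_2(F_\infty)$ and $\|T\|$ is its operator norm. *)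

theory Defs
  imports "HOL-Analysis.Analysis"
begin

(* Free group F_infinity on generators Inl i = alpha_(i+1), Inr j = e_(j+1).
   Elements are reduced words of letters (generator, sign); sign True = positive power. *)
type_synonym letter = "(nat + nat) \<times> bool"
type_synonym word = "letter list"

definition cancels :: "letter \<Rightarrow> letter \<Rightarrow> bool" where
  "cancels a b \<longleftrightarrow> fst a = fst b \<and> snd a \<noteq> snd b"

definition reduced :: "word \<Rightarrow> bool" where
  "reduced w \<longleftrightarrow> successively (\<lambda>a b. \<not> cancels a b) w"

fun push :: "letter \<Rightarrow> word \<Rightarrow> word" where
  "push a [] = [a]"
| "push a (b # w) = (if cancels a b then w else a # b # w)"

definition fmul :: "word \<Rightarrow> word \<Rightarrow> word" where
  "fmul xs ys = foldr push xs ys"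

definition winv :: "word \<Rightarrow> word" where
  "winv w = rev (map (\<lambda>(g, s). (g, \<not> s)) w)"

definition Finf :: "word set" where
  "Finf = {w. reduced w}"

definition Falpha :: "word set" where
  "Falpha = {w. reduced w \<and> (\<forall>a\<in>set w. isl (fst a))}"

definition Kset :: "word set" where
  "Kset = {fmul [(Inr j, True)] u | j u. u \<in> Falpha}"

(* C^n (x) l_2(F_infinity), with n = CARD('n): functions on 'n \<times> F_infinity
   (zero off F_infinity) that are square summable *)
definition ell2 :: "('n \<times> word \<Rightarrow> complex) set" where
  "ell2 = {f. (\<forall>i z. \<not> reduced z \<longrightarrow> f (i, z) = 0) \<and>
              (\<lambda>p. (cmod (f p))\<^sup>2) summable_on UNIV}"

definition l2norm :: "('n \<times> word \<Rightarrow> complex) \<Rightarrow> real" where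
  "l2norm f = sqrt (infsum (\<lambda>p. (cmod (f p))\<^sup>2) UNIV)"

(* An element T = sum_x C x \<otimes> lambda(x) of M_n(C F_infinity) is given by a finitely
   supported coefficient function C :: word \<Rightarrow> n\<times>n matrix. *)
definition in_MnLK :: "(word \<Rightarrow> 'n \<Rightarrow> 'n \<Rightarrow> complex) \<Rightarrow> bool" where
  "in_MnLK C \<longleftrightarrow> finite {x. C x \<noteq> (\<lambda>i j. 0)} \<and> {x. C x \<noteq> (\<lambda>i j. 0)} \<subseteq> Kset"

(* action on C^n (x) l_2: (lambda(x) f)(z) = f(x^-1 z) *)
definition opT :: "(word \<Rightarrow> 'n::finite \<Rightarrow> 'n \<Rightarrow> complex) \<Rightarrow> ('n \<times> word \<Rightarrow> complex)
                    \<Rightarrow> ('n \<times> word \<Rightarrow> complex)" where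
  "opT C f = (\<lambda>(i, z). if reduced z then
      (\<Sum>x\<in>{x. C x \<noteq> (\<lambda>i j. 0)}. \<Sum>j\<in>UNIV. C x i j * f (j, fmul (winv x) z)) else 0)"

definition opnorm :: "(word \<Rightarrow> 'n::finite \<Rightarrow> 'n \<Rightarrow> complex) \<Rightarrow> real" where
  "opnorm C = (SUP f\<in>{f\<in>ell2. l2norm f \<le> 1}. l2norm (opT C f))"

(* adjoint: (sum_x C_x \<otimes> lambda(x))^* = sum_x C_x^* \<otimes> lambda(x^-1) *)
definition adjC :: "(word \<Rightarrow> 'n \<Rightarrow> 'n \<Rightarrow> complex) \<Rightarrow> (word \<Rightarrow> 'n \<Rightarrow> 'n \<Rightarrow> complex)" where
  "adjC C = (\<lambda>x i j. cnj (C (winv x) j i))"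

definition L2alpha :: "('n \<times> word \<Rightarrow> complex) set" where
  "L2alpha = {q. finite {p. q p \<noteq> 0} \<and> (\<forall>i z. q (i, z) \<noteq> 0 \<longrightarrow> z \<in> Falpha)}"

definition vnorm :: "('n::finite \<Rightarrow> complex) \<Rightarrow> real" where
  "vnorm b = sqrt (\<Sum>i\<in>UNIV. (cmod (b i))\<^sup>2)"

definition aT :: "(word \<Rightarrow> 'n::finite \<Rightarrow> 'n \<Rightarrow> complex) \<Rightarrow> real" where
  "aT C = (SUP q\<in>{q\<in>L2alpha. l2norm q \<le> 1}. l2norm (opT C q))"

definition bdelta :: "('n \<Rightarrow> complex) \<Rightarrow> ('n \<times> word \<Rightarrow> complex)" where
  "bdelta b = (\<lambda>(i, z). if z = [] then b i else 0)"

definition bT :: "(word \<Rightarrow> 'n::finite \<Rightarrow> 'n \<Rightarrow> complex) \<Rightarrow> real" where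
  "bT C = (SUP b\<in>{b. vnorm b \<le> 1}. l2norm (opT (adjC C) (bdelta b)))"

end

(*
  Write T = sum_x C_x (x) lambda(x) with every x in the support of the form e_j v, v in F_alpha,
  and split (T f)(z) according to whether the reduced word x^-1 z begins with x^-1.

  If it does, the word w = x^-1 z determines x (x^-1 is w up to its first non-alpha letter)
  and then z = x w.  Hence this b-part is, fibrewise over z, the row operator
  (g_x)_x |-> sum_x C_x g_x applied to g_x = f(x^-1 z), and the row operator is the adjoint of
  c |-> T^* (c (x) delta_1), whose norm is b(T).  Summing over z, the b-part has norm at most
  b(T) |f|.

  Otherwise only the alpha prefix u of w = u t is absorbed and z = e_j (v u) t.  Grouping such z
  by the tail t, the a-part is T applied to the alpha slice u |-> f(u t), which lies in
  C^n (x) L^2_alpha, so it is bounded by a(T) times the norm of the slice; the squared norms of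
  the slices add up to at most |f|^2.

  Conversely C^n (x) L^2_alpha lies in the unit ball of the domain, and
  |T^* (b (x) delta_1)|^2 = <T T^* (b (x) delta_1), b (x) delta_1> <= |T| |T^* (b (x) delta_1)|.
*)

theory Submission
  imports Defs "HOL-Library.Sublist"
begin

lemma cmod_sum_mult_sq_le:
  fixes u v :: "'a \<Rightarrow> complex"
  shows "(cmod (\<Sum>a\<in>A. u a * v a))\<^sup>2 \<le> (\<Sum>a\<in>A. (cmod (u a))\<^sup>2) * (\<Sum>a\<in>A. (cmod (v a))\<^sup>2)"
proof -
  have "cmod (\<Sum>a\<in>A. u a * v a) \<le> (\<Sum>a\<in>A. \<bar>cmod (u a)\<bar> * \<bar>cmod (v a)\<bar>)"
    by (rule order_trans[OF norm_sum]) (simp add: norm_mult)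
  also have "\<dots> \<le> L2_set (\<lambda>a. cmod (u a)) A * L2_set (\<lambda>a. cmod (v a)) A"
    by (rule L2_set_mult_ineq)
  finally have "(cmod (\<Sum>a\<in>A. u a * v a))\<^sup>2 \<le> (L2_set (\<lambda>a. cmod (u a)) A * L2_set (\<lambda>a. cmod (v a)) A)\<^sup>2"
    by (simp add: power_mono)
  then show ?thesis
    by (simp add: L2_set_def power_mult_distrib sum_nonneg)
qed

lemma sqrt_le_mult_sqrt: "0 \<le> a \<Longrightarrow> x \<le> a\<^sup>2 * s \<Longrightarrow> sqrt x \<le> a * sqrt s"
  using real_sqrt_le_mono[of x "a\<^sup>2 * s"] by (simp add: real_sqrt_mult)

lemma sqrt_le_of_le_mult_sqrt:
  fixes a c :: real
  assumes "0 \<le> a" "0 \<le> c" "a \<le> c * sqrt a"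
  shows "sqrt a \<le> c"
proof (cases "a = 0")
  case False
  with assms(1) have "0 < sqrt a" by simp
  moreover have "sqrt a * sqrt a \<le> c * sqrt a"
    using assms(1,3) by simp
  ultimately show ?thesis
    by (rule mult_right_le_imp_le[rotated])
qed (simp add: assms(2))

lemma sum_reindex_inj_le:
  fixes h :: "'b \<Rightarrow> real"
  assumes "finite P" "inj_on \<phi> P" "finite W" "\<And>w. w \<notin> W \<Longrightarrow> h w = 0" "\<And>w. 0 \<le> h w"
  shows "(\<Sum>p\<in>P. h (\<phi> p)) \<le> (\<Sum>w\<in>W. h w)"
proof -
  have "(\<Sum>p\<in>P. h (\<phi> p)) = (\<Sum>w\<in>\<phi> ` P. h w)"
    using assms(2) by (simp add: sum.reindex)
  also have "\<dots> \<le> (\<Sum>w\<in>\<phi> ` P \<union> W. h w)"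
    by (rule sum_mono2) (use assms in auto)
  also have "\<dots> = (\<Sum>w\<in>W. h w)"
    by (rule sum.mono_neutral_right) (use assms in auto)
  finally show ?thesis .
qed

(* If N x = 0, the bound follows by scaling x up without leaving the unit ball. *)
lemma le_SUP_unit_ball_mult:
  fixes F N :: "('a \<Rightarrow> complex) \<Rightarrow> real"
  assumes F_scale: "\<And>c x. F (\<lambda>p. c * x p) = cmod c * F x"
    and N_scale: "\<And>c x. N (\<lambda>p. c * x p) = cmod c * N x"
    and A_scale: "\<And>c x. x \<in> A \<Longrightarrow> (\<lambda>p. c * x p) \<in> A"
    and bdd: "bdd_above (F ` {y \<in> A. N y \<le> 1})"
    and x: "x \<in> A" "0 \<le> N x"
  shows "F x \<le> (SUP y\<in>{y \<in> A. N y \<le> 1}. F y) * N x"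
proof -
  let ?S = "SUP y\<in>{y \<in> A. N y \<le> 1}. F y"
  have scaled: "cmod c * F x \<le> ?S" if "cmod c * N x \<le> 1" for c
    unfolding F_scale[symmetric]
    by (rule cSUP_upper[OF _ bdd]) (simp add: A_scale x(1) N_scale that)
  show ?thesis
  proof (cases "N x = 0")
    case True
    show ?thesis
    proof (rule ccontr)
      assume "\<not> ?thesis"
      then have "0 < F x" using True by simp
      define r where "r = (\<bar>?S\<bar> + 1) / F x"
      have "0 < r" using \<open>0 < F x\<close> by (simp add: r_def add_pos_nonneg)
      then have "cmod (of_real r) * F x = \<bar>?S\<bar> + 1"
        using \<open>0 < F x\<close> by (simp add: r_def del: of_real_divide)
      with scaled[of "of_real r"] True show False by simp
    qed
  next
    case False
    then have "0 < N x" using x(2) by simp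
    define c :: complex where "c = of_real (1 / N x)"
    have "cmod c = 1 / N x"
      using \<open>0 < N x\<close> by (simp add: c_def del: of_real_divide)
    with scaled[of c] \<open>0 < N x\<close> have "F x / N x \<le> ?S"
      by simp
    with \<open>0 < N x\<close> show ?thesis
      by (simp add: divide_le_eq)
  qed
qed

section \<open>Reduced words\<close>

definition letter_inv :: "letter \<Rightarrow> letter" where
  "letter_inv a = (fst a, \<not> snd a)"

lemma letter_inv_letter_inv [simp]: "letter_inv (letter_inv a) = a"
  by (simp add: letter_inv_def)

lemma winv_eq_rev_map: "winv w = rev (map letter_inv w)"
  unfolding winv_def letter_inv_def by (simp add: case_prod_beta')

lemma winv_Nil [simp]: "winv [] = []"
  by (simp add: winv_eq_rev_map)

lemma winv_Cons: "winv (a # w) = winv w @ [letter_inv a]"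
  by (simp add: winv_eq_rev_map)

lemma winv_winv [simp]: "winv (winv w) = w"
  by (simp add: winv_eq_rev_map rev_map comp_def)

lemma inj_winv: "inj winv"
  by (metis injI winv_winv)

lemma cancels_iff: "cancels a b \<longleftrightarrow> b = letter_inv a"
  by (cases a; cases b) (auto simp: cancels_def letter_inv_def)

lemma reduced_Nil [simp]: "reduced []"
  and reduced_singleton [simp]: "reduced [a]"
  and reduced_Cons_Cons [simp]: "reduced (a # b # w) \<longleftrightarrow> \<not> cancels a b \<and> reduced (b # w)"
  by (simp_all add: reduced_def)

lemma reduced_ConsD: "reduced (a # w) \<Longrightarrow> reduced w"
  by (cases w) auto

lemma reduced_appendD: "reduced (u @ w) \<Longrightarrow> reduced u \<and> reduced w"
  by (simp add: reduced_def successively_append_iff)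

lemma reduced_winv: "reduced w \<Longrightarrow> reduced (winv w)"
  unfolding reduced_def winv_eq_rev_map successively_rev successively_map
  by (erule successively_mono) (auto simp: cancels_def letter_inv_def)

lemma reduced_push: "reduced w \<Longrightarrow> reduced (push a w)"
  by (cases w) (auto dest: reduced_ConsD)

lemma fmul_Nil [simp]: "fmul [] w = w"
  and fmul_Cons: "fmul (a # u) w = push a (fmul u w)"
  and fmul_append: "fmul (u @ v) w = fmul u (fmul v w)"
  by (simp_all add: fmul_def)

lemma reduced_fmul: "reduced w \<Longrightarrow> reduced (fmul u w)"
  by (induction u) (auto simp: fmul_Cons reduced_push)

lemma push_letter_inv_push: "reduced w \<Longrightarrow> push (letter_inv a) (push a w) = w"
proof (cases w)
  case (Cons b w')
  assume "reduced w"
  then show ?thesis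
    using Cons by (cases w') (auto simp: cancels_iff)
qed (simp add: cancels_iff)

lemma fmul_winv_fmul: "reduced w \<Longrightarrow> fmul (winv u) (fmul u w) = w"
  by (induction u arbitrary: w)
    (simp_all add: winv_Cons fmul_append fmul_Cons push_letter_inv_push reduced_fmul)

lemma fmul_fmul_winv: "reduced w \<Longrightarrow> fmul u (fmul (winv u) w) = w"
  using fmul_winv_fmul[of w "winv u"] by simp

lemma fmul_eq_append: "reduced (u @ w) \<Longrightarrow> fmul u w = u @ w"
proof (induction u)
  case (Cons a u)
  then have "fmul u w = u @ w" by (auto dest: reduced_ConsD)
  with Cons.prems show ?case
    by (cases "u @ w") (simp_all add: fmul_Cons)
qed simp

lemma fmul_Nil_right: "reduced u \<Longrightarrow> fmul u [] = u"
  using fmul_eq_append[of u "[]"] by simp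

lemma fmul_winv_eq_Nil_iff:
  assumes "reduced u" "reduced w"
  shows "fmul (winv u) w = [] \<longleftrightarrow> w = u"
  using fmul_fmul_winv[OF assms(2), of u] fmul_winv_fmul[of "[]" u] fmul_Nil_right[OF assms(1)]
  by auto

abbreviation is_alpha :: "letter \<Rightarrow> bool" where
  "is_alpha a \<equiv> isl (fst a)"

definition non_alpha_head :: "word \<Rightarrow> bool" where
  "non_alpha_head w \<longleftrightarrow> w = [] \<or> \<not> is_alpha (hd w)"

abbreviation alpha_prefix :: "word \<Rightarrow> word" where
  "alpha_prefix w \<equiv> takeWhile is_alpha w"

abbreviation alpha_rest :: "word \<Rightarrow> word" where
  "alpha_rest w \<equiv> dropWhile is_alpha w"

lemma Falpha_iff: "w \<in> Falpha \<longleftrightarrow> reduced w \<and> list_all is_alpha w"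
  by (simp add: Falpha_def list_all_iff)

lemma list_all_alpha_fmul:
  "list_all is_alpha u \<Longrightarrow> list_all is_alpha w \<Longrightarrow> list_all is_alpha (fmul u w)"
proof (induction u)
  case (Cons a u)
  then show ?case
    by (cases "fmul u w") (simp_all add: fmul_Cons)
qed simp

lemma list_all_alpha_winv: "list_all is_alpha w \<Longrightarrow> list_all is_alpha (winv w)"
  by (simp add: winv_eq_rev_map list_all_iff letter_inv_def)

lemma reduced_alpha_prefix: "reduced w \<Longrightarrow> reduced (alpha_prefix w)"
  using reduced_appendD[of "alpha_prefix w" "alpha_rest w"] by simp

lemma list_all_alpha_prefix: "list_all is_alpha (alpha_prefix w)"
  by (auto simp: list_all_iff dest: set_takeWhileD)

lemma non_alpha_head_rest: "non_alpha_head (alpha_rest w)"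
  unfolding non_alpha_head_def using hd_dropWhile by blast

lemma alpha_prefix_append:
  assumes "list_all is_alpha u" "non_alpha_head t"
  shows "alpha_prefix (u @ t) = u" and "alpha_rest (u @ t) = t"
proof -
  have "alpha_prefix t = []" "alpha_rest t = t"
    using assms(2) by (cases t; simp add: non_alpha_head_def)+
  then show "alpha_prefix (u @ t) = u" "alpha_rest (u @ t) = t"
    using assms(1) by (simp_all add: takeWhile_append2 dropWhile_append2 list_all_iff)
qed

lemma append_alpha_non_alpha_inject:
  assumes "list_all is_alpha u" "non_alpha_head t" "list_all is_alpha u'" "non_alpha_head t'"
    and "u @ t = u' @ t'"
  shows "u = u' \<and> t = t'"
  by (metis alpha_prefix_append assms)

lemma fmul_alpha_append:
  assumes "list_all is_alpha v" "list_all is_alpha u" "non_alpha_head t"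
  shows "fmul v (u @ t) = fmul v u @ t"
  using assms(1)
proof (induction v)
  case (Cons a v)
  then have IH: "fmul v (u @ t) = fmul v u @ t" and "is_alpha a" by auto
  then show ?case
    using assms(3) by (cases "fmul v u"; cases t) (auto simp: fmul_Cons cancels_def non_alpha_head_def)
qed simp

section \<open>The words of K\<close>

lemma Kset_cases:
  assumes "x \<in> Kset"
  obtains j v where "x = (Inr j, True) # v" "v \<in> Falpha"
proof -
  obtain j v where "x = fmul [(Inr j, True)] v" "v \<in> Falpha"
    using assms by (auto simp: Kset_def)
  moreover from \<open>v \<in> Falpha\<close> have "fmul [(Inr j, True)] v = (Inr j, True) # v"
    by (cases v) (auto simp: fmul_def cancels_def Falpha_iff)
  ultimately show ?thesis using that by simp
qed

lemma Kset_reduced: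
  assumes "x \<in> Kset"
  shows "reduced x"
proof -
  obtain j v where "x = (Inr j, True) # v" "v \<in> Falpha"
    using Kset_cases[OF assms] by blast
  then show ?thesis
    by (cases v) (auto simp: Falpha_iff cancels_def)
qed

lemma winv_e_Cons: "winv ((Inr j, True) # v) = winv v @ [(Inr j, False)]"
  by (simp add: winv_Cons letter_inv_def)

lemma push_e_alpha: "list_all is_alpha w \<Longrightarrow> push (Inr j, True) w = (Inr j, True) # w"
  by (cases w) (auto simp: cancels_def)

(* winv x, for x in K, is an alpha word followed by one inverse e-letter, so the first
   non-alpha letter of w determines which winv x can be a prefix of w. *)
lemma prefix_winv_Kset_unique:
  assumes "x \<in> Kset" "x' \<in> Kset" "prefix (winv x) w" "prefix (winv x') w"
  shows "x = x'"
proof -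
  obtain j v j' v' where x: "x = (Inr j, True) # v" "v \<in> Falpha"
    and x': "x' = (Inr j', True) # v'" "v' \<in> Falpha"
    using Kset_cases assms(1,2) by metis
  obtain r where "w = winv v @ (Inr j, False) # r"
    using assms(3) x by (auto simp: prefix_def winv_e_Cons)
  moreover obtain r' where "w = winv v' @ (Inr j', False) # r'"
    using assms(4) x' by (auto simp: prefix_def winv_e_Cons)
  moreover have "list_all is_alpha (winv v)" "list_all is_alpha (winv v')"
    using x(2) x'(2) by (simp_all add: Falpha_iff list_all_alpha_winv)
  ultimately have "winv v = winv v' \<and> (Inr j, False) # r = (Inr j', False) # r'"
    by (intro append_alpha_non_alpha_inject) (simp_all add: non_alpha_head_def)
  then show ?thesis
    using x x' by (metis inj_winv injD list.inject prod.inject sum.inject(2))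
qed

lemma fmul_Kset_not_prefix:
  assumes "v \<in> Falpha" "reduced w" "\<not> prefix (winv ((Inr j, True) # v)) w"
  shows "fmul ((Inr j, True) # v) w = (Inr j, True) # (fmul v (alpha_prefix w) @ alpha_rest w)"
proof -
  have v: "list_all is_alpha v" "reduced v" using assms(1) by (auto simp: Falpha_iff)
  define a where "a = fmul v (alpha_prefix w)"
  have a: "list_all is_alpha a"
    unfolding a_def by (rule list_all_alpha_fmul[OF v(1) list_all_alpha_prefix])
  have "fmul v w = fmul v (alpha_prefix w @ alpha_rest w)"
    by simp
  also have "\<dots> = a @ alpha_rest w"
    unfolding a_def by (rule fmul_alpha_append[OF v(1) list_all_alpha_prefix non_alpha_head_rest])
  finally have fmul_v_w: "fmul v w = a @ alpha_rest w" .
  have "push (Inr j, True) (a @ r) = (Inr j, True) # (a @ r)" if "r = alpha_rest w" for r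
  proof (cases "a = [] \<and> r \<noteq> [] \<and> hd r = (Inr j, False)")
    case True
    have "alpha_prefix w = fmul (winv v) a"
      unfolding a_def by (simp add: fmul_winv_fmul reduced_appendD[of _ "alpha_rest w"] assms(2))
    also have "\<dots> = winv v"
      using True fmul_Nil_right[OF reduced_winv[OF v(2)]] by simp
    finally have "prefix (winv ((Inr j, True) # v)) w"
      using True that takeWhile_dropWhile_id[of is_alpha w]
      by (metis append.assoc append_Cons append_Nil hd_Cons_tl prefix_def winv_e_Cons)
    with assms(3) show ?thesis by simp
  next
    case False
    with a show ?thesis
      by (cases a; cases r) (auto simp: cancels_def)
  qed
  then show ?thesis
    by (simp add: fmul_Cons fmul_v_w a_def)
qed

lemma fmul_winv_e_Cons:
  "fmul (winv ((Inr j, True) # v)) w = fmul (winv v) (push (Inr j, False) w)"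
  by (simp add: winv_e_Cons fmul_append fmul_def)

lemma fmul_winv_e_Cons_other:
  assumes "v \<in> Falpha" "j \<noteq> k"
  shows "fmul (winv ((Inr j, True) # v)) ((Inr k, True) # w) = winv ((Inr j, True) # v) @ (Inr k, True) # w"
proof -
  have "list_all is_alpha (winv v)" "reduced (winv v)"
    using assms(1) by (auto simp: Falpha_iff list_all_alpha_winv reduced_winv)
  then have "fmul (winv v) ([] @ (Inr j, False) # (Inr k, True) # w) = winv v @ (Inr j, False) # (Inr k, True) # w"
    using fmul_alpha_append[of "winv v" "[]"] by (simp add: fmul_Nil_right non_alpha_head_def)
  with assms(2) show ?thesis
    unfolding fmul_winv_e_Cons by (simp add: winv_e_Cons cancels_def)
qed

lemma fmul_winv_e_Cons_same:
  assumes "v \<in> Falpha" "reduced ((Inr k, True) # u @ t)" "list_all is_alpha u" "non_alpha_head t"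
  shows "fmul (winv ((Inr k, True) # v)) ((Inr k, True) # u @ t) = fmul (winv v) u @ t"
    and "\<not> prefix (winv ((Inr k, True) # v)) (fmul (winv v) u @ t)"
proof -
  have winv_v: "list_all is_alpha (winv v)" "reduced (winv v)"
    using assms(1) by (auto simp: Falpha_iff list_all_alpha_winv reduced_winv)
  have y: "list_all is_alpha (fmul (winv v) u)"
    by (rule list_all_alpha_fmul[OF winv_v(1) assms(3)])
  show "fmul (winv ((Inr k, True) # v)) ((Inr k, True) # u @ t) = fmul (winv v) u @ t"
    by (simp add: fmul_winv_e_Cons cancels_def fmul_alpha_append[OF winv_v(1) assms(3,4)])
  show "\<not> prefix (winv ((Inr k, True) # v)) (fmul (winv v) u @ t)"
  proof
    assume "prefix (winv ((Inr k, True) # v)) (fmul (winv v) u @ t)"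
    then obtain r where "fmul (winv v) u @ t = winv v @ (Inr k, False) # r"
      by (auto simp: prefix_def winv_e_Cons)
    then have "fmul (winv v) u = winv v" and t: "t = (Inr k, False) # r"
      using append_alpha_non_alpha_inject[OF y assms(4) winv_v(1), of "(Inr k, False) # r"]
      by (simp_all add: non_alpha_head_def)
    moreover have "reduced u"
      using assms(2) by (auto dest: reduced_ConsD reduced_appendD)
    ultimately have "u = []"
      using fmul_fmul_winv[of u v] fmul_winv_eq_Nil_iff[OF winv_v(2)] assms(1)
      by (auto simp: Falpha_iff fmul_Nil_right reduced_winv)
    with assms(2) t show False by (simp add: cancels_def)
  qed
qed

(* The dichotomy that separates the a-part of T from its b-part. *)
lemma fmul_winv_Kset_Cons_append:
  assumes "x \<in> Kset" "reduced ((Inr k, True) # u @ t)" "list_all is_alpha u" "non_alpha_head t"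
  defines "y \<equiv> fmul (winv x) ((Inr k, True) # u)"
  shows "\<not> prefix (winv x) (fmul (winv x) ((Inr k, True) # u @ t)) \<longleftrightarrow> list_all is_alpha y"
    and "list_all is_alpha y \<Longrightarrow> fmul (winv x) ((Inr k, True) # u @ t) = y @ t"
proof -
  obtain j v where x: "x = (Inr j, True) # v" and v: "v \<in> Falpha"
    using Kset_cases[OF assms(1)] by blast
  have "(\<not> prefix (winv x) (fmul (winv x) ((Inr k, True) # u @ t)) \<longleftrightarrow> list_all is_alpha y)
    \<and> (list_all is_alpha y \<longrightarrow> fmul (winv x) ((Inr k, True) # u @ t) = y @ t)"
  proof (cases "j = k")
    case True
    have "y = fmul (winv v) u"
      by (simp add: y_def x True fmul_winv_e_Cons cancels_def)
    with fmul_winv_e_Cons_same[OF v assms(2-4)] v show ?thesis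
      by (simp add: x True Falpha_iff list_all_alpha_fmul list_all_alpha_winv assms(3))
  next
    case False
    then show ?thesis
      using fmul_winv_e_Cons_other[OF v False] by (simp add: y_def x prefix_def)
  qed
  then show "\<not> prefix (winv x) (fmul (winv x) ((Inr k, True) # u @ t)) \<longleftrightarrow> list_all is_alpha y"
    and "list_all is_alpha y \<Longrightarrow> fmul (winv x) ((Inr k, True) # u @ t) = y @ t"
    by blast+
qed

definition coeff_supp :: "(word \<Rightarrow> 'n \<Rightarrow> 'n \<Rightarrow> complex) \<Rightarrow> word set" where
  "coeff_supp C = {x. C x \<noteq> (\<lambda>i j. 0)}"

definition sqnorm :: "('n \<times> word \<Rightarrow> complex) \<Rightarrow> real" where
  "sqnorm f = infsum (\<lambda>p. (cmod (f p))\<^sup>2) UNIV"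

definition sqnorm_at :: "('n::finite \<times> word \<Rightarrow> complex) \<Rightarrow> word \<Rightarrow> real" where
  "sqnorm_at f w = (\<Sum>j\<in>UNIV. (cmod (f (j, w)))\<^sup>2)"

definition finsupp_on :: "word set \<Rightarrow> ('n \<times> word \<Rightarrow> complex) \<Rightarrow> bool" where
  "finsupp_on W f \<longleftrightarrow> finite W \<and> (\<forall>w\<in>W. reduced w) \<and> (\<forall>j w. w \<notin> W \<longrightarrow> f (j, w) = 0)"

lemma l2norm_eq_sqrt_sqnorm: "l2norm f = sqrt (sqnorm f)"
  by (simp add: l2norm_def sqnorm_def)

lemma sqnorm_nonneg: "0 \<le> sqnorm f"
  by (simp add: sqnorm_def infsum_nonneg)

lemma sqnorm_at_nonneg: "0 \<le> sqnorm_at f w"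
  by (simp add: sqnorm_at_def sum_nonneg)

lemma sqnorm_scale: "sqnorm (\<lambda>p. c * f p) = (cmod c)\<^sup>2 * sqnorm f"
  by (simp add: sqnorm_def norm_mult power_mult_distrib infsum_cmult_right')

lemma l2norm_scale: "l2norm (\<lambda>p. c * f p) = cmod c * l2norm f"
  by (simp add: l2norm_eq_sqrt_sqnorm sqnorm_scale real_sqrt_mult)

lemma l2norm_zero [simp]: "l2norm (\<lambda>p. 0) = 0"
  by (simp add: l2norm_def)

lemma sum_sqnorm_at_eq:
  fixes f :: "'n::finite \<times> word \<Rightarrow> complex"
  assumes "finite W"
  shows "(\<Sum>w\<in>W. sqnorm_at f w) = (\<Sum>p\<in>UNIV \<times> W. (cmod (f p))\<^sup>2)"
proof -
  have "(\<Sum>p\<in>UNIV \<times> W. (cmod (f p))\<^sup>2) = (\<Sum>j\<in>UNIV. \<Sum>w\<in>W. (cmod (f (j, w)))\<^sup>2)"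
    by (simp add: sum.cartesian_product)
  also have "\<dots> = (\<Sum>w\<in>W. sqnorm_at f w)"
    unfolding sqnorm_at_def by (rule sum.swap)
  finally show ?thesis ..
qed

lemma sum_le_sqnorm:
  assumes "(\<lambda>p. (cmod (f p))\<^sup>2) summable_on UNIV" "finite P"
  shows "(\<Sum>p\<in>P. (cmod (f p))\<^sup>2) \<le> sqnorm f"
  unfolding sqnorm_def by (rule finite_sum_le_infsum) (simp_all add: assms)

lemma sum_sqnorm_at_le_sqnorm:
  fixes f :: "'n::finite \<times> word \<Rightarrow> complex"
  assumes "(\<lambda>p. (cmod (f p))\<^sup>2) summable_on UNIV" "finite Z"
  shows "(\<Sum>z\<in>Z. sqnorm_at f z) \<le> sqnorm f"
  unfolding sum_sqnorm_at_eq[OF assms(2)] by (rule sum_le_sqnorm) (simp_all add: assms)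

lemma finsupp_on_summable:
  fixes f :: "'n::finite \<times> word \<Rightarrow> complex"
  assumes "finsupp_on W f"
  shows "(\<lambda>p. (cmod (f p))\<^sup>2) summable_on UNIV"
proof -
  have "(\<lambda>p. (cmod (f p))\<^sup>2) summable_on (UNIV \<times> W)"
    using assms by (simp add: finsupp_on_def)
  then show ?thesis
    by (rule summable_on_cong_neutral[THEN iffD1, rotated -1])
      (use assms in \<open>auto simp: finsupp_on_def\<close>)
qed

lemma sqnorm_finsupp_on:
  fixes f :: "'n::finite \<times> word \<Rightarrow> complex"
  assumes "finsupp_on W f"
  shows "sqnorm f = (\<Sum>w\<in>W. sqnorm_at f w)"
proof -
  have "sqnorm f = infsum (\<lambda>p. (cmod (f p))\<^sup>2) (UNIV \<times> W)"
    unfolding sqnorm_def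
    by (rule infsum_cong_neutral) (use assms in \<open>auto simp: finsupp_on_def\<close>)
  then show ?thesis
    using assms by (simp add: finsupp_on_def sum_sqnorm_at_eq)
qed

lemma finsupp_on_ell2: "finsupp_on W (f :: 'n::finite \<times> word \<Rightarrow> complex) \<Longrightarrow> f \<in> ell2"
  unfolding ell2_def using finsupp_on_summable[of W f] by (auto simp: finsupp_on_def)

lemma zero_ell2: "(\<lambda>p. 0) \<in> (ell2 :: ('n::finite \<times> word \<Rightarrow> complex) set)"
  by (rule finsupp_on_ell2[of "{}"]) (simp add: finsupp_on_def)

lemma L2alpha_finsupp_on:
  assumes "q \<in> L2alpha"
  shows "finsupp_on (snd ` {p. q p \<noteq> 0}) q"
  using assms by (force simp: L2alpha_def Falpha_def finsupp_on_def)

section \<open>The operator and its adjoint\<close>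

lemma opT_apply:
  "opT C f (i, z) = (if reduced z
     then \<Sum>x\<in>coeff_supp C. \<Sum>j\<in>UNIV. C x i j * f (j, fmul (winv x) z) else 0)"
  by (simp add: opT_def coeff_supp_def)

lemma opT_scale: "opT C (\<lambda>p. c * f p) = (\<lambda>p. c * opT C f p)"
  by (auto simp: fun_eq_iff opT_apply sum_distrib_left algebra_simps)

lemma opT_zero: "opT C (\<lambda>p. 0) = (\<lambda>p. 0)"
  by (auto simp: fun_eq_iff opT_apply)

lemma in_MnLK_coeff_supp:
  assumes "in_MnLK C"
  shows "finite (coeff_supp C)" and "coeff_supp C \<subseteq> Kset"
  using assms by (auto simp: in_MnLK_def coeff_supp_def)

definition set_fmul :: "word set \<Rightarrow> word set \<Rightarrow> word set" where
  "set_fmul S W = (\<lambda>(x, w). fmul x w) ` (S \<times> W)"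

lemma finsupp_on_opT:
  assumes "finite (coeff_supp C)" "finsupp_on W f"
  shows "finsupp_on (set_fmul (coeff_supp C) W) (opT C f)"
proof -
  have "opT C f (i, z) = 0" if "z \<notin> set_fmul (coeff_supp C) W" for i z
  proof (cases "reduced z")
    case True
    have "f (j, fmul (winv x) z) = 0" if "x \<in> coeff_supp C" for x j
    proof (rule ccontr)
      assume "f (j, fmul (winv x) z) \<noteq> 0"
      then have "fmul (winv x) z \<in> W" using assms(2) by (auto simp: finsupp_on_def)
      with \<open>x \<in> coeff_supp C\<close> have "fmul x (fmul (winv x) z) \<in> set_fmul (coeff_supp C) W"
        by (force simp: set_fmul_def)
      with True \<open>z \<notin> _\<close> show False by (simp add: fmul_fmul_winv)
    qed
    then show ?thesis by (simp add: opT_apply)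
  qed (simp add: opT_apply)
  then show ?thesis
    using assms by (auto simp: finsupp_on_def set_fmul_def reduced_fmul)
qed

definition adj_sqnorm :: "(word \<Rightarrow> 'n::finite \<Rightarrow> 'n \<Rightarrow> complex) \<Rightarrow> ('n \<Rightarrow> complex) \<Rightarrow> real" where
  "adj_sqnorm C c = (\<Sum>x\<in>coeff_supp C. \<Sum>i\<in>UNIV. (cmod (\<Sum>k\<in>UNIV. cnj (C x k i) * c k))\<^sup>2)"

lemma coeff_supp_adjC: "coeff_supp (adjC C) = winv ` coeff_supp C"
proof -
  have "adjC C y \<noteq> (\<lambda>i j. 0) \<longleftrightarrow> winv y \<in> coeff_supp C" for y
    by (auto simp: adjC_def coeff_supp_def fun_eq_iff)
  then show ?thesis
    by (auto simp: coeff_supp_def image_iff) (metis winv_winv)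
qed

lemma opT_adjC_bdelta:
  assumes "in_MnLK C"
  shows "opT (adjC C) (bdelta c) (i, z) =
    (if z \<in> winv ` coeff_supp C then \<Sum>k\<in>UNIV. cnj (C (winv z) k i) * c k else 0)"
proof -
  have red: "reduced y" if "y \<in> winv ` coeff_supp C" for y
    using that in_MnLK_coeff_supp[OF assms] by (auto intro: reduced_winv Kset_reduced)
  show ?thesis
  proof (cases "reduced z")
    case True
    have "bdelta c (k, fmul (winv y) z) = (if z = y then c k else 0)"
      if "y \<in> winv ` coeff_supp C" for y k
      using fmul_winv_eq_Nil_iff[OF red[OF that] True] by (simp add: bdelta_def)
    note bdelta_at = this
    have "opT (adjC C) (bdelta c) (i, z) = (\<Sum>y\<in>winv ` coeff_supp C.
        \<Sum>k\<in>UNIV. adjC C y i k * bdelta c (k, fmul (winv y) z))"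
      using True by (simp add: opT_apply coeff_supp_adjC)
    also have "\<dots> = (\<Sum>y\<in>winv ` coeff_supp C.
        if z = y then \<Sum>k\<in>UNIV. cnj (C (winv y) k i) * c k else 0)"
      by (rule sum.cong) (auto simp: adjC_def bdelta_at)
    finally show ?thesis
      using in_MnLK_coeff_supp(1)[OF assms] by (simp add: sum.delta)
  qed (use red in \<open>auto simp: opT_apply\<close>)
qed

lemma finsupp_on_opT_adjC_bdelta:
  assumes "in_MnLK C"
  shows "finsupp_on (winv ` coeff_supp C) (opT (adjC C) (bdelta c))"
  using in_MnLK_coeff_supp[OF assms]
  by (auto simp: finsupp_on_def opT_adjC_bdelta[OF assms] intro: reduced_winv Kset_reduced)

lemma sqnorm_opT_adjC_bdelta:
  assumes "in_MnLK C"
  shows "sqnorm (opT (adjC C) (bdelta c)) = adj_sqnorm C c"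
proof -
  have "sqnorm (opT (adjC C) (bdelta c))
      = (\<Sum>y\<in>winv ` coeff_supp C. sqnorm_at (opT (adjC C) (bdelta c)) y)"
    by (rule sqnorm_finsupp_on[OF finsupp_on_opT_adjC_bdelta[OF assms]])
  also have "\<dots> = (\<Sum>x\<in>coeff_supp C. sqnorm_at (opT (adjC C) (bdelta c)) (winv x))"
    by (simp add: sum.reindex inj_on_subset[OF inj_winv])
  also have "\<dots> = adj_sqnorm C c"
    unfolding adj_sqnorm_def sqnorm_at_def by (simp add: opT_adjC_bdelta[OF assms])
  finally show ?thesis .
qed

lemma vnorm_sq: "(vnorm c)\<^sup>2 = (\<Sum>k\<in>UNIV. (cmod (c k))\<^sup>2)"
  by (simp add: vnorm_def sum_nonneg)

lemma vnorm_nonneg: "0 \<le> vnorm c"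
  by (simp add: vnorm_def sum_nonneg)

lemma vnorm_scale: "vnorm (\<lambda>k. r * c k) = cmod r * vnorm c"
  by (simp add: vnorm_def norm_mult power_mult_distrib sum_distrib_left[symmetric] real_sqrt_mult)

lemma bdelta_scale: "bdelta (\<lambda>k. r * c k) = (\<lambda>p. r * bdelta c p)"
  by (auto simp: bdelta_def fun_eq_iff)

lemma adj_sqnorm_nonneg: "0 \<le> adj_sqnorm C c"
  by (simp add: adj_sqnorm_def sum_nonneg)

lemma adj_sqnorm_le_frobenius:
  "adj_sqnorm C c \<le> (\<Sum>x\<in>coeff_supp C. \<Sum>i\<in>UNIV. \<Sum>k\<in>UNIV. (cmod (C x k i))\<^sup>2) * (vnorm c)\<^sup>2"
proof -
  have "(cmod (\<Sum>k\<in>UNIV. cnj (C x k i) * c k))\<^sup>2 \<le> (\<Sum>k\<in>UNIV. (cmod (C x k i))\<^sup>2) * (vnorm c)\<^sup>2"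
    for x i using cmod_sum_mult_sq_le[of "\<lambda>k. cnj (C x k i)" c UNIV] by (simp add: vnorm_sq)
  then show ?thesis
    unfolding adj_sqnorm_def by (simp add: sum_distrib_right sum_mono)
qed

lemma bT_bdd:
  assumes "in_MnLK C"
  shows "bdd_above ((\<lambda>b. l2norm (opT (adjC C) (bdelta b))) ` {b. vnorm b \<le> 1})"
proof (rule bdd_aboveI2)
  let ?M = "\<Sum>x\<in>coeff_supp C. \<Sum>i\<in>UNIV. \<Sum>k\<in>UNIV. (cmod (C x k i))\<^sup>2"
  fix b :: "'a \<Rightarrow> complex"
  assume "b \<in> {b. vnorm b \<le> 1}"
  then have "(vnorm b)\<^sup>2 \<le> 1"
    using vnorm_nonneg[of b] by (simp add: power_le_one)
  then have "adj_sqnorm C b \<le> ?M"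
    using adj_sqnorm_le_frobenius[of C b] by (meson mult_left_le order_trans sum_nonneg zero_le_power2)
  then show "l2norm (opT (adjC C) (bdelta b)) \<le> sqrt ?M"
    by (simp add: l2norm_eq_sqrt_sqnorm sqnorm_opT_adjC_bdelta[OF assms])
qed

lemma bT_nonneg:
  assumes "in_MnLK C"
  shows "0 \<le> bT C"
  unfolding bT_def
  by (rule cSUP_upper2[OF bT_bdd[OF assms], of "\<lambda>k. 0"])
    (simp_all add: vnorm_def l2norm_eq_sqrt_sqnorm sqnorm_opT_adjC_bdelta[OF assms] adj_sqnorm_def)

lemma adj_sqnorm_le_bT:
  assumes "in_MnLK C"
  shows "adj_sqnorm C c \<le> (bT C * vnorm c)\<^sup>2"
proof -
  have "l2norm (opT (adjC C) (bdelta c)) \<le> bT C * vnorm c"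
    unfolding bT_def using bT_bdd[OF assms]
    by (intro le_SUP_unit_ball_mult[where A = UNIV, simplified])
      (simp_all add: bdelta_scale opT_scale l2norm_scale vnorm_scale vnorm_nonneg)
  then have "sqrt (adj_sqnorm C c) \<le> bT C * vnorm c"
    by (simp add: l2norm_eq_sqrt_sqnorm sqnorm_opT_adjC_bdelta[OF assms])
  then show ?thesis
    by (metis adj_sqnorm_nonneg power_mono real_sqrt_ge_zero real_sqrt_pow2)
qed

(* The row operator (g_x)_x |-> sum_x C_x g_x is the adjoint of c |-> T^* (c (x) delta_1),
   so its norm is bT C. *)
lemma row_bound:
  assumes "in_MnLK C"
  shows "(\<Sum>i\<in>UNIV. (cmod (\<Sum>x\<in>coeff_supp C. \<Sum>j\<in>UNIV. C x i j * g x j))\<^sup>2)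
         \<le> (bT C)\<^sup>2 * (\<Sum>x\<in>coeff_supp C. \<Sum>j\<in>UNIV. (cmod (g x j))\<^sup>2)"
proof -
  define S where "S = coeff_supp C"
  define y where "y i = (\<Sum>x\<in>S. \<Sum>j\<in>UNIV. C x i j * g x j)" for i
  define Y where "Y = (\<Sum>i\<in>UNIV. (cmod (y i))\<^sup>2)"
  define G where "G = (\<Sum>x\<in>S. \<Sum>j\<in>UNIV. (cmod (g x j))\<^sup>2)"
  define u where "u x j = (\<Sum>i\<in>UNIV. cnj (y i) * C x i j)" for x j
  have "0 \<le> Y" "0 \<le> G" by (simp_all add: Y_def G_def sum_nonneg)
  have "complex_of_real Y = (\<Sum>i\<in>UNIV. cnj (y i) * y i)"
    unfolding Y_def of_real_sum
    by (rule sum.cong[OF refl], subst complex_norm_square, rule mult.commute)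
  also have "\<dots> = (\<Sum>i\<in>UNIV. \<Sum>x\<in>S. \<Sum>j\<in>UNIV. cnj (y i) * (C x i j * g x j))"
    by (simp add: y_def sum_distrib_left)
  also have "\<dots> = (\<Sum>x\<in>S. \<Sum>i\<in>UNIV. \<Sum>j\<in>UNIV. cnj (y i) * (C x i j * g x j))"
    by (rule sum.swap)
  also have "\<dots> = (\<Sum>x\<in>S. \<Sum>j\<in>UNIV. \<Sum>i\<in>UNIV. cnj (y i) * (C x i j * g x j))"
    by (rule sum.cong[OF refl], rule sum.swap)
  also have "\<dots> = (\<Sum>x\<in>S. \<Sum>j\<in>UNIV. u x j * g x j)"
    by (simp add: u_def sum_distrib_right mult.assoc)
  also have "\<dots> = (\<Sum>(x, j)\<in>S \<times> UNIV. u x j * g x j)"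
    by (rule sum.cartesian_product)
  finally have Y_eq: "complex_of_real Y = (\<Sum>(x, j)\<in>S \<times> UNIV. u x j * g x j)" .
  have u_adj: "cmod (u x j) = cmod (\<Sum>k\<in>UNIV. cnj (C x k j) * y k)" for x j
  proof -
    have "cnj (u x j) = (\<Sum>k\<in>UNIV. cnj (C x k j) * y k)"
      by (simp add: u_def mult.commute)
    then show ?thesis by (metis complex_mod_cnj)
  qed
  have "Y\<^sup>2 = (cmod (complex_of_real Y))\<^sup>2"
    using \<open>0 \<le> Y\<close> by simp
  also have "\<dots> \<le> (\<Sum>(x, j)\<in>S \<times> UNIV. (cmod (u x j))\<^sup>2) * (\<Sum>(x, j)\<in>S \<times> UNIV. (cmod (g x j))\<^sup>2)"
    unfolding Y_eq case_prod_beta by (rule cmod_sum_mult_sq_le)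
  also have "\<dots> = adj_sqnorm C y * G"
    by (simp add: u_adj adj_sqnorm_def S_def G_def sum.cartesian_product)
  also have "\<dots> \<le> (bT C)\<^sup>2 * Y * G"
    using adj_sqnorm_le_bT[OF assms, of y] \<open>0 \<le> G\<close>
    by (intro mult_right_mono) (simp_all add: power_mult_distrib vnorm_sq Y_def)
  finally have "Y * Y \<le> Y * ((bT C)\<^sup>2 * G)"
    by (simp add: power2_eq_square mult_ac)
  then have "Y \<le> (bT C)\<^sup>2 * G"
    using \<open>0 \<le> Y\<close> \<open>0 \<le> G\<close> by (cases "Y = 0") (simp_all add: mult_le_cancel_left)
  then show ?thesis by (simp add: Y_def G_def y_def S_def)
qed

section \<open>The a-part and the b-part of T\<close>

definition b_part :: "(word \<Rightarrow> 'n::finite \<Rightarrow> 'n \<Rightarrow> complex) \<Rightarrow> ('n \<times> word \<Rightarrow> complex) \<Rightarrow> 'n \<Rightarrow> word \<Rightarrow> complex" where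
  "b_part C f i z = (\<Sum>x\<in>coeff_supp C. \<Sum>j\<in>UNIV.
      if prefix (winv x) (fmul (winv x) z) then C x i j * f (j, fmul (winv x) z) else 0)"

definition a_part :: "(word \<Rightarrow> 'n::finite \<Rightarrow> 'n \<Rightarrow> complex) \<Rightarrow> ('n \<times> word \<Rightarrow> complex) \<Rightarrow> 'n \<Rightarrow> word \<Rightarrow> complex" where
  "a_part C f i z = (\<Sum>x\<in>coeff_supp C. \<Sum>j\<in>UNIV.
      if prefix (winv x) (fmul (winv x) z) then 0 else C x i j * f (j, fmul (winv x) z))"

lemma opT_eq_a_part_plus_b_part:
  "reduced z \<Longrightarrow> opT C f (i, z) = a_part C f i z + b_part C f i z"
  by (auto simp: opT_apply a_part_def b_part_def sum.distrib[symmetric] intro!: sum.cong)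

lemma masked_row_bound:
  assumes "in_MnLK C"
  shows "(\<Sum>z\<in>Z. \<Sum>i\<in>UNIV. (cmod (\<Sum>x\<in>coeff_supp C. \<Sum>j\<in>UNIV.
            if sel x z then C x i j * f (j, fmul (winv x) z) else 0))\<^sup>2)
       \<le> (bT C)\<^sup>2 * (\<Sum>z\<in>Z. \<Sum>x\<in>coeff_supp C. if sel x z then sqnorm_at f (fmul (winv x) z) else 0)"
proof -
  have "(\<Sum>i\<in>UNIV. (cmod (\<Sum>x\<in>coeff_supp C. \<Sum>j\<in>UNIV.
            if sel x z then C x i j * f (j, fmul (winv x) z) else 0))\<^sup>2)
       \<le> (bT C)\<^sup>2 * (\<Sum>x\<in>coeff_supp C. if sel x z then sqnorm_at f (fmul (winv x) z) else 0)" for z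
  proof -
    define g where "g x j = (if sel x z then f (j, fmul (winv x) z) else 0)" for x j
    have "C x i j * g x j = (if sel x z then C x i j * f (j, fmul (winv x) z) else 0)" for x i j
      by (simp add: g_def)
    moreover have "(\<Sum>j\<in>UNIV. (cmod (g x j))\<^sup>2) = (if sel x z then sqnorm_at f (fmul (winv x) z) else 0)"
      for x by (simp add: g_def sqnorm_at_def)
    ultimately show ?thesis
      using row_bound[OF assms, of g] by simp
  qed
  then show ?thesis
    by (simp add: sum_distrib_left sum_mono)
qed

lemma sum_fmul_winv_le_card:
  fixes h :: "word \<Rightarrow> real"
  assumes "finite Z" "\<forall>z\<in>Z. reduced z" "finite W" "\<And>w. w \<notin> W \<Longrightarrow> h w = 0" "\<And>w. 0 \<le> h w"
  shows "(\<Sum>z\<in>Z. \<Sum>x\<in>S. h (fmul (winv x) z)) \<le> card S * (\<Sum>w\<in>W. h w)"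
proof -
  have "(\<Sum>z\<in>Z. \<Sum>x\<in>S. h (fmul (winv x) z)) = (\<Sum>x\<in>S. \<Sum>z\<in>Z. h (fmul (winv x) z))"
    by (rule sum.swap)
  also have "\<dots> \<le> (\<Sum>x\<in>S. \<Sum>w\<in>W. h w)"
  proof (rule sum_mono, rule sum_reindex_inj_le)
    show "inj_on (fmul (winv x)) Z" for x
      using assms(2) by (metis fmul_fmul_winv inj_onI)
  qed (use assms in auto)
  finally show ?thesis by simp
qed

(* When winv x is a prefix of fmul (winv x) z, that word determines x and hence z. *)
lemma sum_prefix_winv_le:
  fixes h :: "word \<Rightarrow> real"
  assumes "S \<subseteq> Kset" "finite S" "finite Z" "\<forall>z\<in>Z. reduced z"
    and "finite W" "\<And>w. w \<notin> W \<Longrightarrow> h w = 0" "\<And>w. 0 \<le> h w"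
  shows "(\<Sum>z\<in>Z. \<Sum>x\<in>S. if prefix (winv x) (fmul (winv x) z) then h (fmul (winv x) z) else 0)
         \<le> (\<Sum>w\<in>W. h w)"
proof -
  define \<phi> where "\<phi> p = fmul (winv (snd p)) (fst p)" for p :: "word \<times> word"
  define P where "P = {p \<in> Z \<times> S. prefix (winv (snd p)) (\<phi> p)}"
  have "(\<Sum>z\<in>Z. \<Sum>x\<in>S. if prefix (winv x) (fmul (winv x) z) then h (fmul (winv x) z) else 0)
      = (\<Sum>p\<in>P. h (\<phi> p))"
    using assms(2,3)
    by (simp add: P_def \<phi>_def sum.cartesian_product sum.inter_filter case_prod_beta)
  also have "\<dots> \<le> (\<Sum>w\<in>W. h w)"
  proof (rule sum_reindex_inj_le)
    show "inj_on \<phi> P"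
    proof (rule inj_onI)
      fix p q assume "p \<in> P" "q \<in> P" "\<phi> p = \<phi> q"
      then have "snd p = snd q"
        using assms(1) by (intro prefix_winv_Kset_unique[of _ _ "\<phi> p"]) (auto simp: P_def)
      moreover have "fst p = fmul (snd p) (\<phi> p)" "fst q = fmul (snd q) (\<phi> q)"
        using \<open>p \<in> P\<close> \<open>q \<in> P\<close> assms(4) by (auto simp: P_def \<phi>_def fmul_fmul_winv)
      ultimately show "p = q"
        using \<open>\<phi> p = \<phi> q\<close> by (simp add: prod_eq_iff)
    qed
  qed (use assms in \<open>auto simp: P_def\<close>)
  finally show ?thesis .
qed

lemma sum_b_part_le:
  fixes f :: "'n::finite \<times> word \<Rightarrow> complex"
  assumes "in_MnLK C" "finsupp_on W f" "finite Z" "\<forall>z\<in>Z. reduced z"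
  shows "(\<Sum>z\<in>Z. \<Sum>i\<in>UNIV. (cmod (b_part C f i z))\<^sup>2) \<le> (bT C)\<^sup>2 * sqnorm f"
proof -
  have "(\<Sum>z\<in>Z. \<Sum>i\<in>UNIV. (cmod (b_part C f i z))\<^sup>2) \<le> (bT C)\<^sup>2 * (\<Sum>z\<in>Z. \<Sum>x\<in>coeff_supp C.
      if prefix (winv x) (fmul (winv x) z) then sqnorm_at f (fmul (winv x) z) else 0)"
    unfolding b_part_def by (rule masked_row_bound[OF assms(1)])
  also have "\<dots> \<le> (bT C)\<^sup>2 * (\<Sum>w\<in>W. sqnorm_at f w)"
    using in_MnLK_coeff_supp[OF assms(1)] assms(2-4)
    by (intro mult_left_mono sum_prefix_winv_le)
      (auto simp: finsupp_on_def sqnorm_at_def sum_nonneg)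
  finally show ?thesis
    by (simp add: sqnorm_finsupp_on[OF assms(2)])
qed

lemma sqnorm_opT_le_card:
  fixes f :: "'n::finite \<times> word \<Rightarrow> complex"
  assumes "in_MnLK C" "finsupp_on W f"
  shows "sqnorm (opT C f) \<le> (bT C)\<^sup>2 * card (coeff_supp C) * sqnorm f"
proof -
  define Z where "Z = set_fmul (coeff_supp C) W"
  have fin: "finsupp_on Z (opT C f)"
    unfolding Z_def by (rule finsupp_on_opT[OF in_MnLK_coeff_supp(1)[OF assms(1)] assms(2)])
  then have "sqnorm (opT C f) = (\<Sum>z\<in>Z. \<Sum>i\<in>UNIV. (cmod (\<Sum>x\<in>coeff_supp C. \<Sum>j\<in>UNIV.
      if True then C x i j * f (j, fmul (winv x) z) else 0))\<^sup>2)"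
    by (auto simp: sqnorm_finsupp_on sqnorm_at_def opT_apply finsupp_on_def intro!: sum.cong)
  also have "\<dots> \<le> (bT C)\<^sup>2 * (\<Sum>z\<in>Z. \<Sum>x\<in>coeff_supp C. sqnorm_at f (fmul (winv x) z))"
    using masked_row_bound[OF assms(1), where Z = Z and sel = "\<lambda>_ _. True"] by simp
  also have "\<dots> \<le> (bT C)\<^sup>2 * (card (coeff_supp C) * (\<Sum>w\<in>W. sqnorm_at f w))"
    using fin assms(2)
    by (intro mult_left_mono sum_fmul_winv_le_card)
      (auto simp: finsupp_on_def sqnorm_at_def sum_nonneg)
  finally show ?thesis
    by (simp add: sqnorm_finsupp_on[OF assms(2)] mult.assoc)
qed

lemma aT_bdd:
  assumes "in_MnLK C"
  shows "bdd_above ((\<lambda>q. l2norm (opT C q)) ` {q\<in>L2alpha. l2norm q \<le> 1})"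
proof (rule bdd_aboveI2)
  fix q :: "'a \<times> word \<Rightarrow> complex"
  assume "q \<in> {q\<in>L2alpha. l2norm q \<le> 1}"
  then have "q \<in> L2alpha" "sqnorm q \<le> 1"
    using sqnorm_nonneg[of q] by (auto simp: l2norm_eq_sqrt_sqnorm)
  then have "sqnorm (opT C q) \<le> (bT C)\<^sup>2 * card (coeff_supp C)"
    using sqnorm_opT_le_card[OF assms L2alpha_finsupp_on] by (meson mult_left_le order_trans zero_le_mult_iff of_nat_0_le_iff zero_le_power2)
  then show "l2norm (opT C q) \<le> sqrt ((bT C)\<^sup>2 * card (coeff_supp C))"
    by (simp add: l2norm_eq_sqrt_sqnorm)
qed

lemma aT_nonneg:
  assumes "in_MnLK C"
  shows "0 \<le> aT C"
  unfolding aT_def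
  by (rule cSUP_upper2[OF aT_bdd[OF assms], of "\<lambda>p. 0"]) (simp_all add: L2alpha_def opT_zero)

lemma L2alpha_scale: "q \<in> L2alpha \<Longrightarrow> (\<lambda>p. c * q p) \<in> L2alpha"
  by (auto simp: L2alpha_def elim: finite_subset[rotated])

lemma l2norm_opT_le_aT:
  assumes "in_MnLK C" "q \<in> L2alpha"
  shows "l2norm (opT C q) \<le> aT C * l2norm q"
  unfolding aT_def using aT_bdd[OF assms(1)] assms(2)
  by (intro le_SUP_unit_ball_mult)
    (simp_all add: opT_scale l2norm_scale L2alpha_scale l2norm_eq_sqrt_sqnorm sqnorm_nonneg)

definition alpha_slice :: "('n \<times> word \<Rightarrow> complex) \<Rightarrow> word \<Rightarrow> ('n \<times> word \<Rightarrow> complex)" where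
  "alpha_slice f t = (\<lambda>(j, u). if list_all is_alpha u then f (j, u @ t) else 0)"

lemma alpha_slice_nonzeroD:
  assumes "finsupp_on W f" "non_alpha_head t" "alpha_slice f t (j, u) \<noteq> 0"
  shows "u \<in> alpha_prefix ` W" and "u \<in> Falpha"
proof -
  have u: "list_all is_alpha u" and "f (j, u @ t) \<noteq> 0"
    using assms(3) by (auto simp: alpha_slice_def split: if_splits)
  then have "u @ t \<in> W" using assms(1) by (auto simp: finsupp_on_def)
  then show "u \<in> alpha_prefix ` W"
    using alpha_prefix_append(1)[OF u assms(2)] by (metis image_eqI)
  show "u \<in> Falpha"
    using \<open>u @ t \<in> W\<close> assms(1) u by (auto simp: finsupp_on_def Falpha_iff dest: reduced_appendD)
qed

lemma finsupp_on_alpha_slice: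
  assumes "finsupp_on W f" "non_alpha_head t"
  shows "finsupp_on (alpha_prefix ` W) (alpha_slice f t)"
  using assms alpha_slice_nonzeroD(1)[OF assms]
  by (auto simp: finsupp_on_def reduced_alpha_prefix)

lemma alpha_slice_L2alpha:
  fixes f :: "'n::finite \<times> word \<Rightarrow> complex"
  assumes "finsupp_on W f" "non_alpha_head t"
  shows "alpha_slice f t \<in> L2alpha"
proof -
  have "{p. alpha_slice f t p \<noteq> 0} \<subseteq> UNIV \<times> alpha_prefix ` W"
    using alpha_slice_nonzeroD(1)[OF assms] by auto
  moreover have "finite (UNIV \<times> alpha_prefix ` W :: ('n \<times> word) set)"
    using assms(1) by (simp add: finsupp_on_def)
  ultimately show ?thesis
    using alpha_slice_nonzeroD(2)[OF assms] by (auto simp: L2alpha_def elim: finite_subset)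
qed

lemma sqnorm_at_alpha_slice:
  "sqnorm_at (alpha_slice f t) u = (if list_all is_alpha u then sqnorm_at f (u @ t) else 0)"
  by (simp add: sqnorm_at_def alpha_slice_def)

lemma sum_sqnorm_alpha_slice_le:
  fixes f :: "'n::finite \<times> word \<Rightarrow> complex"
  assumes "finsupp_on W f" "finite T" "\<forall>t\<in>T. non_alpha_head t"
  shows "(\<Sum>t\<in>T. sqnorm (alpha_slice f t)) \<le> sqnorm f"
proof -
  define U where "U = alpha_prefix ` W"
  define P where "P = {p \<in> T \<times> U. list_all is_alpha (snd p)}"
  have "finite U" using assms(1) by (simp add: U_def finsupp_on_def)
  have "(\<Sum>t\<in>T. sqnorm (alpha_slice f t))
      = (\<Sum>t\<in>T. \<Sum>u\<in>U. if list_all is_alpha u then sqnorm_at f (u @ t) else 0)"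
    using sqnorm_finsupp_on[OF finsupp_on_alpha_slice[OF assms(1)]] assms(3)
    by (simp add: U_def sqnorm_at_alpha_slice)
  also have "\<dots> = (\<Sum>p\<in>P. sqnorm_at f (snd p @ fst p))"
    using assms(2) \<open>finite U\<close>
    by (simp add: P_def sum.cartesian_product sum.inter_filter case_prod_beta)
  also have "\<dots> \<le> (\<Sum>w\<in>W. sqnorm_at f w)"
  proof (rule sum_reindex_inj_le)
    show "inj_on (\<lambda>p. snd p @ fst p) P"
    proof (rule inj_onI)
      fix p q assume "p \<in> P" "q \<in> P" "snd p @ fst p = snd q @ fst q"
      with assms(3) show "p = q"
        using append_alpha_non_alpha_inject[of "snd p" "fst p" "snd q" "fst q"]
        by (auto simp: P_def prod_eq_iff)
    qed
  qed (use assms \<open>finite U\<close> in \<open>auto simp: P_def finsupp_on_def sqnorm_at_def sum_nonneg\<close>)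
  finally show ?thesis
    by (simp add: sqnorm_finsupp_on[OF assms(1)])
qed

lemma a_part_eq_opT_alpha_slice:
  assumes "in_MnLK C" "reduced ((Inr k, True) # u @ t)" "list_all is_alpha u" "non_alpha_head t"
  shows "a_part C f i ((Inr k, True) # u @ t) = opT C (alpha_slice f t) (i, (Inr k, True) # u)"
proof -
  have "reduced u"
    using assms(2) by (auto dest: reduced_ConsD reduced_appendD)
  with assms(3) have red: "reduced ((Inr k, True) # u)"
    by (cases u) (auto simp: cancels_def)
  have term_eq: "(if prefix (winv x) (fmul (winv x) ((Inr k, True) # u @ t)) then 0
        else C x i j * f (j, fmul (winv x) ((Inr k, True) # u @ t)))
      = C x i j * alpha_slice f t (j, fmul (winv x) ((Inr k, True) # u))"
    if "x \<in> coeff_supp C" for x j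
  proof -
    have "x \<in> Kset" using that in_MnLK_coeff_supp(2)[OF assms(1)] by blast
    note x_cases = fmul_winv_Kset_Cons_append[OF this assms(2-4)]
    show ?thesis
    proof (cases "list_all is_alpha (fmul (winv x) ((Inr k, True) # u))")
      case True
      moreover have "\<not> prefix (winv x) (fmul (winv x) ((Inr k, True) # u @ t))"
        using x_cases(1) True by simp
      ultimately show ?thesis by (simp add: x_cases(2) alpha_slice_def)
    next
      case False
      then show ?thesis using x_cases(1) by (simp add: alpha_slice_def)
    qed
  qed
  have "a_part C f i ((Inr k, True) # u @ t) = (\<Sum>x\<in>coeff_supp C. \<Sum>j\<in>UNIV.
      C x i j * alpha_slice f t (j, fmul (winv x) ((Inr k, True) # u)))"
    unfolding a_part_def by (intro sum.cong refl) (erule term_eq)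
  then show ?thesis
    using red by (simp only: opT_apply if_True)
qed

lemma a_part_nonzero_decomp:
  assumes "in_MnLK C" "finsupp_on W f" "reduced z" "a_part C f i z \<noteq> 0"
  obtains x w j u where "x \<in> coeff_supp C" "w \<in> W" "list_all is_alpha u"
    "(Inr j, True) # u = fmul x (alpha_prefix w)" "z = (Inr j, True) # u @ alpha_rest w"
proof -
  obtain x where x: "x \<in> coeff_supp C" and nz: "(\<Sum>j\<in>UNIV.
      if prefix (winv x) (fmul (winv x) z) then 0 else C x i j * f (j, fmul (winv x) z)) \<noteq> 0"
    using assms(4) unfolding a_part_def by (rule sum.not_neutral_contains_not_neutral)
  from nz obtain j where
    "(if prefix (winv x) (fmul (winv x) z) then 0 else C x i j * f (j, fmul (winv x) z)) \<noteq> 0"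
    by (rule sum.not_neutral_contains_not_neutral)
  then have np: "\<not> prefix (winv x) (fmul (winv x) z)" and "f (j, fmul (winv x) z) \<noteq> 0"
    by (auto split: if_splits)
  then have w: "fmul (winv x) z \<in> W" (is "?w \<in> W")
    using assms(2) by (auto simp: finsupp_on_def)
  obtain j0 v where x_eq: "x = (Inr j0, True) # v" and v: "v \<in> Falpha"
    using Kset_cases in_MnLK_coeff_supp(2)[OF assms(1)] x by blast
  define u where "u = fmul v (alpha_prefix ?w)"
  have u: "list_all is_alpha u"
    using v by (simp add: u_def Falpha_iff list_all_alpha_fmul list_all_alpha_prefix)
  have "z = fmul x ?w"
    by (simp add: fmul_fmul_winv assms(3))
  also have "\<dots> = (Inr j0, True) # u @ alpha_rest ?w"
    using fmul_Kset_not_prefix[OF v, of ?w j0] np w assms(2) by (simp add: finsupp_on_def x_eq u_def)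
  finally have "z = (Inr j0, True) # u @ alpha_rest ?w" .
  moreover have "fmul x (alpha_prefix ?w) = push (Inr j0, True) u"
    by (simp add: x_eq fmul_Cons u_def)
  then have "(Inr j0, True) # u = fmul x (alpha_prefix ?w)"
    by (simp add: push_e_alpha[OF u])
  ultimately show ?thesis
    using that x w u by blast
qed

lemma sqnorm_opT_le_aT:
  assumes "in_MnLK C" "q \<in> L2alpha"
  shows "sqnorm (opT C q) \<le> (aT C)\<^sup>2 * sqnorm q"
proof -
  have "sqrt (sqnorm (opT C q)) \<le> aT C * sqrt (sqnorm q)"
    using l2norm_opT_le_aT[OF assms] by (simp add: l2norm_eq_sqrt_sqnorm)
  then show ?thesis
    by (metis power_mono power_mult_distrib real_sqrt_ge_zero real_sqrt_pow2 sqnorm_nonneg)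
qed

lemma a_part_nonzero_split:
  assumes "in_MnLK C" "finsupp_on W f" "reduced z" "a_part C f i z \<noteq> 0"
  defines "t \<equiv> alpha_rest (tl z)" and "y \<equiv> hd z # alpha_prefix (tl z)"
  shows "t \<in> alpha_rest ` W" "y \<in> set_fmul (coeff_supp C) (alpha_prefix ` W)" "z = y @ t"
    and "a_part C f i' z = opT C (alpha_slice f t) (i', y)"
proof -
  obtain x w j u where "x \<in> coeff_supp C" "w \<in> W" and u: "list_all is_alpha u"
    and xw: "(Inr j, True) # u = fmul x (alpha_prefix w)"
    and z: "z = (Inr j, True) # u @ alpha_rest w"
    using a_part_nonzero_decomp[OF assms(1-4)] by blast
  have t: "t = alpha_rest w" and y: "y = (Inr j, True) # u"
    using alpha_prefix_append[OF u non_alpha_head_rest] by (simp_all add: t_def y_def z)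
  show "t \<in> alpha_rest ` W" "z = y @ t"
    using \<open>w \<in> W\<close> by (simp_all add: t y z)
  show "y \<in> set_fmul (coeff_supp C) (alpha_prefix ` W)"
    using \<open>x \<in> _\<close> \<open>w \<in> W\<close> xw by (force simp: y set_fmul_def)
  show "a_part C f i' z = opT C (alpha_slice f t) (i', y)"
    using a_part_eq_opT_alpha_slice[OF assms(1) _ u non_alpha_head_rest] assms(3)
    by (simp add: t y z)
qed

lemma sum_sqnorm_opT_alpha_slice_le:
  fixes f :: "'n::finite \<times> word \<Rightarrow> complex"
  assumes "in_MnLK C" "finsupp_on W f" "finite T" "\<forall>t\<in>T. non_alpha_head t" "finite Y"
  shows "(\<Sum>t\<in>T. \<Sum>y\<in>Y. sqnorm_at (opT C (alpha_slice f t)) y) \<le> (aT C)\<^sup>2 * sqnorm f"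
proof -
  have "(\<Sum>t\<in>T. \<Sum>y\<in>Y. sqnorm_at (opT C (alpha_slice f t)) y) \<le> (\<Sum>t\<in>T. sqnorm (opT C (alpha_slice f t)))"
  proof (rule sum_mono)
    fix t assume "t \<in> T"
    then have "finsupp_on (set_fmul (coeff_supp C) (alpha_prefix ` W)) (opT C (alpha_slice f t))"
      using assms(4) finsupp_on_opT[OF in_MnLK_coeff_supp(1)[OF assms(1)] finsupp_on_alpha_slice[OF assms(2)]]
      by blast
    then show "(\<Sum>y\<in>Y. sqnorm_at (opT C (alpha_slice f t)) y) \<le> sqnorm (opT C (alpha_slice f t))"
      by (rule sum_sqnorm_at_le_sqnorm[OF finsupp_on_summable assms(5)])
  qed
  also have "\<dots> \<le> (\<Sum>t\<in>T. (aT C)\<^sup>2 * sqnorm (alpha_slice f t))"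
    using assms(4) by (intro sum_mono sqnorm_opT_le_aT[OF assms(1) alpha_slice_L2alpha[OF assms(2)]]) simp
  also have "\<dots> = (aT C)\<^sup>2 * (\<Sum>t\<in>T. sqnorm (alpha_slice f t))"
    by (rule sum_distrib_left[symmetric])
  also have "\<dots> \<le> (aT C)\<^sup>2 * sqnorm f"
    by (rule mult_left_mono[OF sum_sqnorm_alpha_slice_le[OF assms(2-4)]]) simp
  finally show ?thesis .
qed

(* Grouping the words z = e_j u t by their tail t turns the a-part of T f into T applied
   to the alpha slices of f. *)
lemma sum_a_part_le:
  fixes f :: "'n::finite \<times> word \<Rightarrow> complex"
  assumes "in_MnLK C" "finsupp_on W f" "finite Z" "\<forall>z\<in>Z. reduced z"
  shows "(\<Sum>z\<in>Z. \<Sum>i\<in>UNIV. (cmod (a_part C f i z))\<^sup>2) \<le> (aT C)\<^sup>2 * sqnorm f"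
proof -
  define T where "T = alpha_rest ` W"
  define Y where "Y = set_fmul (coeff_supp C) (alpha_prefix ` W)"
  define Z1 where "Z1 = {z \<in> Z. \<exists>i. a_part C f i z \<noteq> 0}"
  define F where "F z = (\<Sum>i\<in>UNIV. (cmod (a_part C f i z))\<^sup>2)" for z
  define H where "H p = sqnorm_at (opT C (alpha_slice f (fst p))) (snd p)" for p
  define split where "split z = (alpha_rest (tl z), hd z # alpha_prefix (tl z))" for z
  have fin: "finite W" "finite (coeff_supp C)"
    using assms(2) in_MnLK_coeff_supp[OF assms(1)] by (simp_all add: finsupp_on_def)
  have T: "finite T" "\<forall>t\<in>T. non_alpha_head t"
    using fin by (simp_all add: T_def non_alpha_head_rest)
  have "finite Y" using fin by (simp add: Y_def set_fmul_def)
  have split: "split z \<in> T \<times> Y \<and> F z = H (split z) \<and> snd (split z) @ fst (split z) = z"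
    if "z \<in> Z1" for z
  proof -
    obtain i where "z \<in> Z" "a_part C f i z \<noteq> 0" using \<open>z \<in> Z1\<close> unfolding Z1_def by blast
    note z_split = a_part_nonzero_split[OF assms(1,2) _ this(2)]
    show ?thesis
      using z_split \<open>z \<in> Z\<close> assms(4)
      by (simp add: split_def T_def Y_def F_def H_def sqnorm_at_def)
  qed
  have "(\<Sum>z\<in>Z. F z) = (\<Sum>z\<in>Z1. F z)"
    by (rule sum.mono_neutral_right) (use assms(3) in \<open>auto simp: Z1_def F_def\<close>)
  also have "\<dots> = (\<Sum>p\<in>split ` Z1. H p)"
  proof -
    have "inj_on split Z1"
      using split by (metis inj_onI)
    then show ?thesis
      using split by (simp add: sum.reindex)
  qed
  also have "\<dots> \<le> (\<Sum>p\<in>T \<times> Y. H p)"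
  proof (rule sum_mono2)
    show "split ` Z1 \<subseteq> T \<times> Y"
      using split by blast
  qed (use T \<open>finite Y\<close> in \<open>auto simp: H_def sqnorm_at_nonneg\<close>)
  also have "\<dots> \<le> (aT C)\<^sup>2 * sqnorm f"
    using sum_sqnorm_opT_alpha_slice_le[OF assms(1,2) T \<open>finite Y\<close>]
    by (simp add: H_def sum.cartesian_product case_prod_beta)
  finally show ?thesis
    by (simp only: F_def)
qed

section \<open>The norm of T\<close>

lemma sqnorm_opT_finsupp_le:
  fixes f :: "'n::finite \<times> word \<Rightarrow> complex"
  assumes "in_MnLK C" "finsupp_on W f"
  shows "sqnorm (opT C f) \<le> (aT C + bT C)\<^sup>2 * sqnorm f"
proof -
  define Z where "Z = set_fmul (coeff_supp C) W"
  have fin: "finsupp_on Z (opT C f)"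
    unfolding Z_def by (rule finsupp_on_opT[OF in_MnLK_coeff_supp(1)[OF assms(1)] assms(2)])
  then have Z: "finite Z" "\<forall>z\<in>Z. reduced z" by (simp_all add: finsupp_on_def)
  let ?L2 = "\<lambda>g. L2_set (\<lambda>p. g (snd p) (fst p)) (Z \<times> UNIV)"
  have L2_eq: "?L2 g = sqrt (\<Sum>z\<in>Z. \<Sum>i\<in>UNIV. (g i z)\<^sup>2)" for g :: "'n \<Rightarrow> word \<Rightarrow> real"
    by (simp add: L2_set_def sum.cartesian_product split_def)
  have "sqrt (sqnorm (opT C f)) = ?L2 (\<lambda>i z. cmod (opT C f (i, z)))"
    by (simp add: L2_eq[of "\<lambda>i z. cmod (opT C f (i, z))"] sqnorm_finsupp_on[OF fin] sqnorm_at_def)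
  also have "\<dots> \<le> ?L2 (\<lambda>i z. cmod (a_part C f i z) + cmod (b_part C f i z))"
    using Z(2) by (intro L2_set_mono)
      (auto simp: opT_eq_a_part_plus_b_part norm_triangle_ineq)
  also have "\<dots> \<le> ?L2 (\<lambda>i z. cmod (a_part C f i z)) + ?L2 (\<lambda>i z. cmod (b_part C f i z))"
    by (rule L2_set_triangle_ineq)
  also have "\<dots> \<le> aT C * sqrt (sqnorm f) + bT C * sqrt (sqnorm f)"
    using sum_a_part_le[OF assms Z] sum_b_part_le[OF assms Z]
      aT_nonneg[OF assms(1)] bT_nonneg[OF assms(1)]
    unfolding L2_eq[of "\<lambda>i z. cmod (a_part C f i z)"] L2_eq[of "\<lambda>i z. cmod (b_part C f i z)"]
    by (intro add_mono sqrt_le_mult_sqrt)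
  finally have "sqrt (sqnorm (opT C f)) \<le> (aT C + bT C) * sqrt (sqnorm f)"
    by (simp add: distrib_right)
  then show ?thesis
    by (metis power_mono power_mult_distrib real_sqrt_ge_zero real_sqrt_pow2 sqnorm_nonneg)
qed

(* On finitely many coordinates opT C f only depends on finitely many values of f. *)
lemma opT_eq_on_truncation:
  fixes f :: "'n::finite \<times> word \<Rightarrow> complex"
  assumes "finite (coeff_supp C)" "f \<in> ell2" "finite P"
  obtains W g where "finsupp_on W g" "sqnorm g \<le> sqnorm f" "\<And>p. p \<in> P \<Longrightarrow> opT C g p = opT C f p"
proof
  define W where "W = (\<lambda>(x, z). fmul (winv x) z) ` (coeff_supp C \<times> {z \<in> snd ` P. reduced z})"
  define g where "g = (\<lambda>(j, w). if w \<in> W then f (j, w) else 0)"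
  have "finite W" using assms(1,3) by (simp add: W_def)
  then show fin: "finsupp_on W g"
    by (auto simp: finsupp_on_def W_def g_def reduced_fmul)
  have "sqnorm g = (\<Sum>w\<in>W. sqnorm_at f w)"
    unfolding sqnorm_finsupp_on[OF fin] by (simp add: sqnorm_at_def g_def)
  also have "\<dots> \<le> sqnorm f"
    using assms(2) \<open>finite W\<close> by (intro sum_sqnorm_at_le_sqnorm) (simp_all add: ell2_def)
  finally show "sqnorm g \<le> sqnorm f" .
  fix p assume "p \<in> P"
  obtain i z where p: "p = (i, z)" by fastforce
  have "fmul (winv x) z \<in> W" if "x \<in> coeff_supp C" "reduced z" for x
    using that \<open>p \<in> P\<close> p unfolding W_def by force
  then show "opT C g p = opT C f p"
    by (simp add: p opT_apply g_def)
qed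

lemma sqnorm_opT_le:
  fixes f :: "'n::finite \<times> word \<Rightarrow> complex"
  assumes "in_MnLK C" "f \<in> ell2"
  shows "sqnorm (opT C f) \<le> (aT C + bT C)\<^sup>2 * sqnorm f"
proof -
  define M where "M = (aT C + bT C)\<^sup>2 * sqnorm f"
  have partial: "(\<Sum>p\<in>P. (cmod (opT C f p))\<^sup>2) \<le> M" if P: "finite P" for P
  proof -
    obtain W g where g: "finsupp_on W g" "sqnorm g \<le> sqnorm f" "\<And>p. p \<in> P \<Longrightarrow> opT C g p = opT C f p"
      using opT_eq_on_truncation[OF in_MnLK_coeff_supp(1)[OF assms(1)] assms(2) P] by blast
    have "(\<Sum>p\<in>P. (cmod (opT C f p))\<^sup>2) = (\<Sum>p\<in>P. (cmod (opT C g p))\<^sup>2)"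
      by (simp add: g(3))
    also have "\<dots> \<le> sqnorm (opT C g)"
      using finsupp_on_opT[OF in_MnLK_coeff_supp(1)[OF assms(1)] g(1)]
      by (intro sum_le_sqnorm[OF _ P] finsupp_on_summable)
    also have "\<dots> \<le> (aT C + bT C)\<^sup>2 * sqnorm g"
      by (rule sqnorm_opT_finsupp_le[OF assms(1) g(1)])
    also have "\<dots> \<le> M"
      unfolding M_def by (rule mult_left_mono[OF g(2)]) simp
    finally show ?thesis .
  qed
  have "(\<lambda>p. (cmod (opT C f p))\<^sup>2) summable_on UNIV"
    using partial by (intro nonneg_bdd_above_summable_on bdd_aboveI2) auto
  then show ?thesis
    unfolding sqnorm_def[of "opT C f"] M_def[symmetric]
    by (rule infsum_le_finite_sums) (simp add: partial)
qed

lemma ell2_scale: "f \<in> ell2 \<Longrightarrow> (\<lambda>p. c * f p) \<in> ell2"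
  by (auto simp: ell2_def norm_mult power_mult_distrib summable_on_cmult_right)

lemma L2alpha_subset_ell2: "(L2alpha :: ('n::finite \<times> word \<Rightarrow> complex) set) \<subseteq> ell2"
  using L2alpha_finsupp_on finsupp_on_ell2 by blast

lemma l2norm_opT_unit_le:
  assumes "in_MnLK C" "f \<in> ell2" "l2norm f \<le> 1"
  shows "l2norm (opT C f) \<le> aT C + bT C"
proof -
  have "sqnorm f \<le> 1"
    using assms(3) by (simp add: l2norm_eq_sqrt_sqnorm)
  then have "sqnorm (opT C f) \<le> (aT C + bT C)\<^sup>2"
    using sqnorm_opT_le[OF assms(1,2)] by (meson mult_left_le order_trans zero_le_power2)
  then show ?thesis
    using aT_nonneg[OF assms(1)] bT_nonneg[OF assms(1)]
    by (simp add: l2norm_eq_sqrt_sqnorm real_le_lsqrt)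
qed

lemma opnorm_bdd:
  assumes "in_MnLK C"
  shows "bdd_above ((\<lambda>f. l2norm (opT C f)) ` {f \<in> ell2. l2norm f \<le> 1})"
  using l2norm_opT_unit_le[OF assms] by (intro bdd_aboveI2) auto

lemma opnorm_le_aT_plus_bT:
  assumes "in_MnLK C"
  shows "opnorm C \<le> aT C + bT C"
  unfolding opnorm_def
  using l2norm_opT_unit_le[OF assms] zero_ell2 by (intro cSUP_least) fastforce+

lemma l2norm_opT_le_opnorm:
  assumes "in_MnLK C" "f \<in> ell2"
  shows "l2norm (opT C f) \<le> opnorm C * l2norm f"
  unfolding opnorm_def using opnorm_bdd[OF assms(1)] assms(2)
  by (intro le_SUP_unit_ball_mult)
    (simp_all add: opT_scale l2norm_scale ell2_scale l2norm_eq_sqrt_sqnorm sqnorm_nonneg)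

lemma opnorm_nonneg:
  assumes "in_MnLK C"
  shows "0 \<le> opnorm C"
  unfolding opnorm_def
  by (rule cSUP_upper2[OF opnorm_bdd[OF assms], of "\<lambda>p. 0"]) (simp_all add: zero_ell2 opT_zero)

lemma aT_le_opnorm:
  assumes "in_MnLK C"
  shows "aT C \<le> opnorm C"
  unfolding aT_def opnorm_def
  by (rule cSUP_subset_mono[OF _ opnorm_bdd[OF assms]])
    (use L2alpha_subset_ell2 in \<open>auto simp: L2alpha_def intro!: exI[of _ "\<lambda>p. 0"]\<close>)

lemma adj_sqnorm_eq_inner:
  assumes "in_MnLK C"
  shows "complex_of_real (adj_sqnorm C b)
    = (\<Sum>i\<in>UNIV. cnj (b i) * opT C (opT (adjC C) (bdelta b)) (i, []))"
proof -
  define S where "S = coeff_supp C"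
  define y where "y x j = (\<Sum>k\<in>UNIV. cnj (C x k j) * b k)" for x j
  have T_adj: "opT C (opT (adjC C) (bdelta b)) (i, []) = (\<Sum>x\<in>S. \<Sum>j\<in>UNIV. C x i j * y x j)" for i
  proof -
    have "opT (adjC C) (bdelta b) (j, fmul (winv x) []) = y x j" if "x \<in> S" for x j
    proof -
      have "reduced (winv x)"
        using that in_MnLK_coeff_supp(2)[OF assms] by (auto simp: S_def intro: reduced_winv Kset_reduced)
      with that show ?thesis
        by (simp add: S_def y_def opT_adjC_bdelta[OF assms] fmul_Nil_right)
    qed
    then show ?thesis
      unfolding opT_apply[of C _ i "[]"] by (simp add: S_def[symmetric])
  qed
  have "complex_of_real (adj_sqnorm C b) = (\<Sum>x\<in>S. \<Sum>j\<in>UNIV. cnj (y x j) * y x j)"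
    unfolding adj_sqnorm_def S_def[symmetric] y_def[symmetric] of_real_sum
    by (intro sum.cong refl, subst complex_norm_square, rule mult.commute)
  also have "\<dots> = (\<Sum>x\<in>S. \<Sum>j\<in>UNIV. \<Sum>i\<in>UNIV. cnj (b i) * (C x i j * y x j))"
    by (simp add: y_def sum_distrib_right sum_distrib_left mult_ac)
  also have "\<dots> = (\<Sum>x\<in>S. \<Sum>i\<in>UNIV. \<Sum>j\<in>UNIV. cnj (b i) * (C x i j * y x j))"
    by (rule sum.cong[OF refl], rule sum.swap)
  also have "\<dots> = (\<Sum>i\<in>UNIV. \<Sum>x\<in>S. \<Sum>j\<in>UNIV. cnj (b i) * (C x i j * y x j))"
    by (rule sum.swap)
  also have "\<dots> = (\<Sum>i\<in>UNIV. cnj (b i) * opT C (opT (adjC C) (bdelta b)) (i, []))"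
    by (simp add: T_adj sum_distrib_left)
  finally show ?thesis .
qed

lemma adj_sqnorm_le_opnorm:
  assumes "in_MnLK C"
  shows "adj_sqnorm C b \<le> vnorm b * (opnorm C * sqrt (adj_sqnorm C b))"
proof -
  let ?h = "opT (adjC C) (bdelta b)"
  have fin: "finsupp_on (winv ` coeff_supp C) ?h"
    by (rule finsupp_on_opT_adjC_bdelta[OF assms])
  have "adj_sqnorm C b = cmod (\<Sum>i\<in>UNIV. cnj (b i) * opT C ?h (i, []))"
    unfolding adj_sqnorm_eq_inner[OF assms, symmetric] using adj_sqnorm_nonneg[of C b] by simp
  also have "\<dots> \<le> sqrt ((\<Sum>i\<in>UNIV. (cmod (cnj (b i)))\<^sup>2) * (\<Sum>i\<in>UNIV. (cmod (opT C ?h (i, [])))\<^sup>2))"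
    by (rule real_le_rsqrt, rule cmod_sum_mult_sq_le)
  also have "\<dots> = vnorm b * sqrt (sqnorm_at (opT C ?h) [])"
    by (simp add: vnorm_def sqnorm_at_def real_sqrt_mult)
  also have "\<dots> \<le> vnorm b * l2norm (opT C ?h)"
    using sum_sqnorm_at_le_sqnorm[of "opT C ?h" "{[]}"]
      finsupp_on_summable[OF finsupp_on_opT[OF in_MnLK_coeff_supp(1)[OF assms] fin]]
    by (intro mult_left_mono) (simp_all add: l2norm_eq_sqrt_sqnorm vnorm_nonneg)
  also have "\<dots> \<le> vnorm b * (opnorm C * l2norm ?h)"
    using l2norm_opT_le_opnorm[OF assms finsupp_on_ell2[OF fin]]
    by (intro mult_left_mono) (simp_all add: vnorm_nonneg)
  finally show ?thesis
    by (simp add: l2norm_eq_sqrt_sqnorm sqnorm_opT_adjC_bdelta[OF assms])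
qed

lemma bT_le_opnorm:
  assumes "in_MnLK C"
  shows "bT C \<le> opnorm C"
  unfolding bT_def
proof (rule cSUP_least)
  show "{b. vnorm b \<le> 1} \<noteq> {}"
    by (auto simp: vnorm_def intro: exI[of _ "\<lambda>k. 0"])
  fix b :: "'a \<Rightarrow> complex"
  assume "b \<in> {b. vnorm b \<le> 1}"
  then have "vnorm b * (opnorm C * sqrt (adj_sqnorm C b)) \<le> opnorm C * sqrt (adj_sqnorm C b)"
    by (intro mult_left_le_one_le) (simp_all add: vnorm_nonneg opnorm_nonneg[OF assms] adj_sqnorm_nonneg)
  with adj_sqnorm_le_opnorm[OF assms, of b]
  have "adj_sqnorm C b \<le> opnorm C * sqrt (adj_sqnorm C b)"
    by simp
  then show "l2norm (opT (adjC C) (bdelta b)) \<le> opnorm C"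
    using opnorm_nonneg[OF assms] adj_sqnorm_nonneg[of C b]
    by (simp add: l2norm_eq_sqrt_sqnorm sqnorm_opT_adjC_bdelta[OF assms] sqrt_le_of_le_mult_sqrt)
qed

theorem proposition8:
  fixes C :: "word \<Rightarrow> 'n::finite \<Rightarrow> 'n \<Rightarrow> complex"
  assumes "in_MnLK C"
  shows "max (aT C) (bT C) \<le> opnorm C \<and> opnorm C \<le> aT C + bT C"
  using aT_le_opnorm[OF assms] bT_le_opnorm[OF assms] opnorm_le_aT_plus_bT[OF assms] by simp

end
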